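(* Let $K$ be a compact space whose topology is the order topology of a linear order on $K$, and assume $K$ is fragmentable. Then $K$ is almost totally disconnected.
   Context: A quasi metric on a set $K$ is a symmetric map $d:K\times K\to[0,+\infty)$ such that $d(x,y)=0$ iff $x=y$ (the triangle inequality is not required). A map $d:K\times K\to[0,+\infty)$ fragments a topological space $K$ if for every nonempty closed subset $L\subseteq K$ and every $\varepsilon>0$ there is a nonempty relatively open subset $U$ of $L$ with $\sup\{d(x,y):x,y\in U\}<\varepsilon$. A compact space $K$ is fragmentable if there exists a quasi metric on $K$ which fragments $K$. For a set $\Gamma$, $\Sigma_0^1[0,1]^\Gamma$ denotes the subspace of $[0,1]^\Gamma$ (product topology) consisting of those $x$ such that $x_\gamma\in\{0,1\}$ for all but countably many $\gamma\in\Gamma$. A compact space is almost totally disconnected if it is homeomorphic to a subspace of $\Sigma_0^1[0,1]^\Gamma$ for some set $\Gamma$. *)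

theory Defs
  imports "HOL-Analysis.Analysis"
begin

definition quasi_metric_on :: "'a set \<Rightarrow> ('a \<Rightarrow> 'a \<Rightarrow> real) \<Rightarrow> bool" where
  "quasi_metric_on K d \<longleftrightarrow>
     (\<forall>x\<in>K. \<forall>y\<in>K. d x y \<ge> 0 \<and> d x y = d y x \<and> (d x y = 0 \<longleftrightarrow> x = y))"

text \<open>Since U is nonempty, "sup < eps" is written as: some c < eps bounds d on U x U.\<close>
definition fragments :: "('a \<Rightarrow> 'a \<Rightarrow> real) \<Rightarrow> 'a topology \<Rightarrow> bool" where
  "fragments d X \<longleftrightarrow>
     (\<forall>L. closedin X L \<and> L \<noteq> {} \<longrightarrow>
        (\<forall>\<epsilon>>0. \<exists>U. openin (subtopology X L) U \<and> U \<noteq> {} \<and>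
                    (\<exists>c<\<epsilon>. \<forall>x\<in>U. \<forall>y\<in>U. d x y \<le> c)))"

definition fragmentable :: "'a topology \<Rightarrow> bool" where
  "fragmentable X \<longleftrightarrow> (\<exists>d. quasi_metric_on (topspace X) d \<and> fragments d X)"

definition cube_top :: "'i set \<Rightarrow> ('i \<Rightarrow> real) topology" where
  "cube_top \<Gamma> = product_topology (\<lambda>_. top_of_set {0..1}) \<Gamma>"

definition Sigma01 :: "'i set \<Rightarrow> ('i \<Rightarrow> real) set" where
  "Sigma01 \<Gamma> = {x \<in> topspace (cube_top \<Gamma>). countable {\<gamma>\<in>\<Gamma>. x \<gamma> \<notin> {0, 1}}}"

text \<open>The index set Gamma is taken inside the type of pairs of points of the space
  (this loses no generality for compact spaces).\<close>
definition almost_totally_disconnected :: "'a topology \<Rightarrow> bool" where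
  "almost_totally_disconnected X \<longleftrightarrow>
     (\<exists>(\<Gamma>::('a \<times> 'a) set) S. S \<subseteq> Sigma01 \<Gamma> \<and>
        X homeomorphic_space subtopology (cube_top \<Gamma>) S)"

end

theory Submission
  imports Defs
begin

text \<open>
  Let K be a compact linearly ordered space and d a quasi metric fragmenting K.
  For every n, Zorn's lemma gives a maximal family F n of pairwise disjoint nonempty open
  intervals of d-diameter below 1/(n+1).  Together with the jumps (pairs a < b with nothing in
  between) these intervals form a family \<Gamma> of pairs a < b which is
  \<^item> point-countable: a point lies in at most one interval of each F n, and
  \<^item> separating: whenever x < y some pair of \<Gamma> lies in [x, y].  If [x, y] has no jump, fragmentability and
  maximality make every union of F n dense in [x, y]; Baire's theorem gives a point p of (x, y)
  covered by every F n, and if no interval of any F n lay inside (x, y), the interval through p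
  would contain x or y, forcing d(x, p) = 0 or d(y, p) = 0.
  Finally, Urysohn functions that are 0 left of a and 1 right of b, for (a, b) in \<Gamma>, embed K
  into the cube [0, 1]^\<Gamma>, and the image lies in \<Sigma>_0^1[0, 1]^\<Gamma> by point-countability.
\<close>

definition ivl :: "'a::linorder \<times> 'a \<Rightarrow> 'a set" where
  "ivl p = {fst p<..<snd p}"

definition dense_between :: "'a::linorder \<Rightarrow> 'a \<Rightarrow> bool" where
  "dense_between u v \<longleftrightarrow> (\<forall>s t. u \<le> s \<and> s < t \<and> t \<le> v \<longrightarrow> {s<..<t} \<noteq> {})"

lemma dense_between_mono:
  "dense_between u v \<Longrightarrow> u \<le> s \<Longrightarrow> t \<le> v \<Longrightarrow> dense_between s t"
  unfolding dense_between_def by (meson order_trans)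

lemma nonempty_interval_subset_bounds:
  fixes a b x y :: "'a::linorder"
  assumes "{a<..<b} \<noteq> {}" "{a<..<b} \<subseteq> {x<..<y}"
  shows "x \<le> a \<and> b \<le> y"
proof -
  obtain z where z: "a < z" "z < b" using assms(1) by auto
  have "\<not> (a < x \<and> x < b)" "\<not> (a < y \<and> y < b)" using assms(2) by auto
  then show ?thesis using z assms(2) by (smt (verit) greaterThanLessThan_iff leI less_trans subsetD)
qed

lemma open_contains_subinterval:
  fixes u v z :: "'a::linorder_topology"
  assumes G: "open G" "z \<in> G" and z: "u \<le> z" "z \<le> v" and uv: "u < v" "dense_between u v"
  shows "\<exists>s t. u \<le> s \<and> t \<le> v \<and> {s<..<t} \<noteq> {} \<and> {s<..<t} \<subseteq> G"
proof (cases "z < v")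
  case True
  then obtain b where "z < b" "{z..<b} \<subseteq> G" using open_right[OF G] by blast
  moreover have "{z<..<min b v} \<noteq> {}"
    using uv(2) z(1) \<open>z < b\<close> True unfolding dense_between_def
    by (metis min.cobounded2 min_less_iff_conj)
  moreover have "{z<..<min b v} \<subseteq> {z..<b}" by auto
  ultimately show ?thesis using z(1) by (metis min.cobounded2 order_trans)
next
  case False
  with z uv have "u < z" "z = v" by auto
  then obtain b where "b < z" "{b<..z} \<subseteq> G" using open_left[OF G] by blast
  moreover have "{max b u<..<z} \<noteq> {}"
    using uv(2) \<open>u < z\<close> \<open>b < z\<close> \<open>z = v\<close> unfolding dense_between_def
    by (metis max.cobounded2 max_less_iff_conj order_refl)
  moreover have "{max b u<..<z} \<subseteq> {b<..z}" by auto
  ultimately show ?thesis using \<open>z = v\<close> by (metis max.cobounded2 order_trans order_refl)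
qed

definition small_ivl :: "('a::linorder \<Rightarrow> 'a \<Rightarrow> real) \<Rightarrow> real \<Rightarrow> 'a \<times> 'a \<Rightarrow> bool" where
  "small_ivl d \<epsilon> p \<longleftrightarrow> ivl p \<noteq> {} \<and> (\<exists>c<\<epsilon>. \<forall>x\<in>ivl p. \<forall>y\<in>ivl p. d x y \<le> c)"

lemma fragments_small_subinterval:
  fixes d :: "'a::linorder_topology \<Rightarrow> 'a \<Rightarrow> real"
  assumes "fragments d euclidean" "\<epsilon> > 0" "u < v" "dense_between u v"
  shows "\<exists>s t. u \<le> s \<and> t \<le> v \<and> small_ivl d \<epsilon> (s, t)"
proof -
  have "closedin euclidean {u..v}" "{u..v} \<noteq> {}" using assms(3) by auto
  then obtain U c where U: "openin (subtopology euclidean {u..v}) U" "U \<noteq> {}" "c < \<epsilon>"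
      "\<forall>x\<in>U. \<forall>y\<in>U. d x y \<le> c"
    using assms(1,2) unfolding fragments_def by meson
  then obtain G where G: "open G" "U = G \<inter> {u..v}" by (auto simp: openin_subtopology)
  obtain z where "z \<in> G" "u \<le> z" "z \<le> v" using U(2) G(2) by auto
  then obtain s t where st: "u \<le> s" "t \<le> v" "{s<..<t} \<noteq> {}" "{s<..<t} \<subseteq> G"
    using open_contains_subinterval[OF G(1) _ _ _ assms(3,4)] by blast
  have "{s<..<t} \<subseteq> U" using st G(2) by auto
  then have "small_ivl d \<epsilon> (s, t)"
    using st(3) U(3,4) unfolding small_ivl_def ivl_def fst_conv snd_conv by blast
  then show ?thesis using st(1,2) by blast
qed

definition maximal_disjoint_family :: "('b \<Rightarrow> bool) \<Rightarrow> ('b \<Rightarrow> 'c set) \<Rightarrow> 'b set \<Rightarrow> bool" where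
  "maximal_disjoint_family P I F \<longleftrightarrow> (\<forall>p\<in>F. P p) \<and> disjoint_family_on I F \<and>
     (\<forall>q. P q \<and> (\<forall>p\<in>F. I q \<inter> I p = {}) \<longrightarrow> q \<in> F)"

lemma maximal_disjoint_family_exists: "\<exists>F. maximal_disjoint_family P I F"
proof -
  define A where "A = {F. (\<forall>p\<in>F. P p) \<and> disjoint_family_on I F}"
  have "\<Union>C \<in> A" if C: "C \<in> chains A" for C
    unfolding A_def
  proof (intro CollectI conjI ballI)
    show "P p" if "p \<in> \<Union>C" for p using C that unfolding chains_def A_def by blast
    show "disjoint_family_on I (\<Union>C)"
      unfolding disjoint_family_on_def
    proof (intro ballI impI)
      fix p q assume pq: "p \<in> \<Union>C" "q \<in> \<Union>C" "p \<noteq> q"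
      then obtain X where "X \<in> C" "p \<in> X" "q \<in> X"
        using C unfolding chains_def chain_subset_def by blast
      then have "disjoint_family_on I X" using C unfolding chains_def A_def by blast
      then show "I p \<inter> I q = {}" using \<open>p \<in> X\<close> \<open>q \<in> X\<close> pq(3)
        unfolding disjoint_family_on_def by blast
    qed
  qed
  then obtain M where M: "M \<in> A" "\<forall>X\<in>A. M \<subseteq> X \<longrightarrow> X = M" using Zorn_Lemma by blast
  have "q \<in> M" if q: "P q" "\<forall>p\<in>M. I q \<inter> I p = {}" for q
  proof (rule ccontr)
    assume "q \<notin> M"
    then have "insert q M \<in> A"
      using M(1) q unfolding A_def by (auto simp: disjoint_family_on_insert)
    then show False using M(2) \<open>q \<notin> M\<close> by blast
  qed
  then show ?thesis using M(1) unfolding A_def maximal_disjoint_family_def by blast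
qed

lemma disjoint_family_point_countable:
  assumes "disjoint_family_on I F"
  shows "countable {p\<in>F. x \<in> I p}"
proof (cases "{p\<in>F. x \<in> I p} = {}")
  case False
  then obtain p where "p \<in> F" "x \<in> I p" by blast
  then have "q = p" if "q \<in> F" "x \<in> I q" for q
    using assms that unfolding disjoint_family_on_def by blast
  then have "{p\<in>F. x \<in> I p} \<subseteq> {p}" by blast
  then show ?thesis by (rule countable_subset) simp
qed (metis countable_empty)

lemma maximal_small_family_meets:
  fixes d :: "'a::linorder_topology \<Rightarrow> 'a \<Rightarrow> real"
  assumes "fragments d euclidean" "\<epsilon> > 0" "maximal_disjoint_family (small_ivl d \<epsilon>) ivl F"
    and "u < v" "dense_between u v"
  shows "\<exists>p\<in>F. ivl p \<inter> {u<..<v} \<noteq> {}"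
proof (rule ccontr)
  assume none: "\<not> ?thesis"
  obtain s t where st: "u \<le> s" "t \<le> v" "small_ivl d \<epsilon> (s, t)"
    using fragments_small_subinterval[OF assms(1,2,4,5)] by blast
  have sub: "ivl (s, t) \<subseteq> {u<..<v}" using st(1,2) unfolding ivl_def by auto
  then have "\<forall>p\<in>F. ivl (s, t) \<inter> ivl p = {}" using none by blast
  then have "(s, t) \<in> F" using st(3) assms(3) unfolding maximal_disjoint_family_def by blast
  moreover have "ivl (s, t) \<noteq> {}" using st(3) unfolding small_ivl_def by blast
  ultimately show False using none sub by blast
qed

text \<open>Hence its union is dense in every dense closed interval [x, y]; equivalently, adding
  the complement of [x, y] gives a dense set, which is the form needed for Baire's theorem.\<close>
lemma small_family_dense:
  fixes d :: "'a::linorder_topology \<Rightarrow> 'a \<Rightarrow> real"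
  assumes "fragments d euclidean" "\<epsilon> > 0" "maximal_disjoint_family (small_ivl d \<epsilon>) ivl F"
    and "x < y" "dense_between x y"
  shows "closure (\<Union>(ivl ` F) \<union> - {x..y}) = UNIV"
proof -
  have "(\<Union>(ivl ` F) \<union> - {x..y}) \<inter> W \<noteq> {}" if W: "open W" "W \<noteq> {}" for W
  proof (cases "W \<subseteq> {x..y}")
    case True
    obtain z where "z \<in> W" using W(2) by blast
    with True have "z \<in> W" "x \<le> z" "z \<le> y" by auto
    then obtain s t where st: "x \<le> s" "t \<le> y" "{s<..<t} \<noteq> {}" "{s<..<t} \<subseteq> W"
      using open_contains_subinterval[OF W(1) _ _ _ assms(4,5)] by blast
    then have "s < t" "dense_between s t" using dense_between_mono[OF assms(5)] by auto
    then obtain p where "p \<in> F" "ivl p \<inter> {s<..<t} \<noteq> {}"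
      using maximal_small_family_meets[OF assms(1-3)] by blast
    then show ?thesis using st(4) by blast
  next
    case False
    then show ?thesis by blast
  qed
  then have "euclidean closure_of (\<Union>(ivl ` F) \<union> - {x..y}) = topspace euclidean"
    unfolding dense_intersects_open by auto
  then show ?thesis by simp
qed

lemma linorder_Hausdorff_space: "Hausdorff_space (euclidean :: 'a::linorder_topology topology)"
  unfolding Hausdorff_space_def disjnt_def using hausdorff by (metis open_openin)

text \<open>Baire category theorem in the compact space: some point of a dense interval (x, y)
  lies in a member of every family F n.\<close>
lemma point_in_all_small_families:
  fixes d :: "'a::linorder_topology \<Rightarrow> 'a \<Rightarrow> real" and F :: "nat \<Rightarrow> ('a \<times> 'a) set"
  assumes "compact (UNIV :: 'a set)" "fragments d euclidean"
    and F: "\<And>n. maximal_disjoint_family (small_ivl d (1 / Suc n)) ivl (F n)"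
    and "x < y" "dense_between x y"
  shows "\<exists>p. x < p \<and> p < y \<and> (\<forall>n. \<exists>q\<in>F n. p \<in> ivl q)"
proof -
  define D where "D n = \<Union>(ivl ` F n) \<union> - {x..y}" for n
  have cs: "compact_space (euclidean :: 'a topology)" using assms(1) by (simp add: compact_space_def)
  have Baire: "locally_compact_space (euclidean :: 'a topology) \<and> regular_space (euclidean :: 'a topology)"
    using compact_imp_locally_compact_space[OF cs]
      compact_Hausdorff_imp_regular_space[OF cs linorder_Hausdorff_space] by blast
  have "openin euclidean (D n) \<and> euclidean closure_of (D n) = topspace euclidean" for n
  proof
    show "openin euclidean (D n)" unfolding D_def ivl_def by (auto intro!: open_Un open_UN)
    show "euclidean closure_of (D n) = topspace euclidean"
      using small_family_dense[OF assms(2) _ F assms(4,5)] unfolding D_def by simp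
  qed
  then have "euclidean closure_of \<Inter>(range D) = topspace euclidean"
    by (intro Baire_category[OF disjI2[OF Baire]]) auto
  moreover have "{x<..<y} \<noteq> {}" using assms(4,5) unfolding dense_between_def by blast
  ultimately have "\<Inter>(range D) \<inter> {x<..<y} \<noteq> {}" unfolding dense_intersects_open by simp
  then obtain p where "p \<in> \<Inter>(range D)" "x < p" "p < y" by auto
  then show ?thesis unfolding D_def by auto
qed

text \<open>If no member of any F n lies inside (x, y), then the member
  of F n through the Baire point p sticks out of (x, y), so it contains x or y; being of
  diameter < 1/(n+1), this forces d(x, p) = 0 or d(y, p) = 0, i.e. p = x or p = y.\<close>
lemma small_family_member_inside:
  fixes d :: "'a::linorder_topology \<Rightarrow> 'a \<Rightarrow> real" and F :: "nat \<Rightarrow> ('a \<times> 'a) set"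
  assumes "compact (UNIV :: 'a set)" "quasi_metric_on UNIV d" "fragments d euclidean"
    and F: "\<And>n. maximal_disjoint_family (small_ivl d (1 / Suc n)) ivl (F n)"
    and "x < y" "dense_between x y"
  shows "\<exists>n. \<exists>q\<in>F n. ivl q \<subseteq> {x<..<y}"
proof (rule ccontr)
  assume outside: "\<not> ?thesis"
  obtain p where p: "x < p" "p < y" "\<And>n. \<exists>q\<in>F n. p \<in> ivl q"
    using point_in_all_small_families[OF assms(1,3) F assms(5,6)] by blast
  have "min (d x p) (d y p) < 1 / Suc n" for n
  proof -
    obtain q where q: "q \<in> F n" "p \<in> ivl q" using p(3) by blast
    moreover have "\<not> ivl q \<subseteq> {x<..<y}" using outside q(1) by blast
    ultimately have "x \<in> ivl q \<or> y \<in> ivl q" using p(1,2) unfolding ivl_def by auto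
    moreover obtain c where "c < 1 / Suc n" "\<forall>a\<in>ivl q. \<forall>b\<in>ivl q. d a b \<le> c"
      using q(1) F unfolding maximal_disjoint_family_def small_ivl_def by blast
    ultimately have "d x p \<le> c \<or> d y p \<le> c" using q(2) by blast
    then show ?thesis using \<open>c < 1 / Suc n\<close> by linarith
  qed
  then have "min (d x p) (d y p) \<le> 0" by (meson leI nat_approx_posE order_less_asym)
  moreover have qm: "d a b \<ge> 0" "d a b = 0 \<Longrightarrow> a = b" for a b
    using assms(2) unfolding quasi_metric_on_def by blast+
  ultimately have "d x p = 0 \<or> d y p = 0" by (smt (verit))
  then show False using p(1,2) qm(2) by blast
qed

definition jump :: "'a::linorder \<times> 'a \<Rightarrow> bool" where
  "jump p \<longleftrightarrow> fst p < snd p \<and> ivl p = {}"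

text \<open>Jumps lie in no open interval, so the jumps together with countably many disjoint
  families of intervals form a point-countable family.\<close>
lemma jumps_and_disjoint_families_point_countable:
  fixes F :: "nat \<Rightarrow> ('a::linorder \<times> 'a) set"
  assumes "\<And>n. disjoint_family_on ivl (F n)"
  shows "countable {\<gamma> \<in> Collect jump \<union> (\<Union>n. F n). x \<in> ivl \<gamma>}"
proof -
  have "{\<gamma> \<in> Collect jump \<union> (\<Union>n. F n). x \<in> ivl \<gamma>} \<subseteq> (\<Union>n. {q\<in>F n. x \<in> ivl q})"
    unfolding jump_def by blast
  moreover have "countable {q\<in>F n. x \<in> ivl q}" for n
    using assms by (rule disjoint_family_point_countable)
  then have "countable (\<Union>n. {q\<in>F n. x \<in> ivl q})" by (intro countable_UN) auto
  ultimately show ?thesis by (rule countable_subset)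
qed

lemma fragmentable_separating_family:
  fixes d :: "'a::linorder_topology \<Rightarrow> 'a \<Rightarrow> real"
  assumes "compact (UNIV :: 'a set)" "quasi_metric_on UNIV d" "fragments d euclidean"
  obtains \<Gamma> :: "('a \<times> 'a) set" where "\<And>\<gamma>. \<gamma> \<in> \<Gamma> \<Longrightarrow> fst \<gamma> < snd \<gamma>"
    and "\<And>x y. x < y \<Longrightarrow> \<exists>\<gamma>\<in>\<Gamma>. x \<le> fst \<gamma> \<and> snd \<gamma> \<le> y"
    and "\<And>x. countable {\<gamma>\<in>\<Gamma>. x \<in> ivl \<gamma>}"
proof -
  have "\<forall>n. \<exists>G. maximal_disjoint_family (small_ivl d (1 / Suc n)) ivl G"
    using maximal_disjoint_family_exists by blast
  then obtain F where F: "\<And>n. maximal_disjoint_family (small_ivl d (1 / Suc n)) ivl (F n)"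
    by (metis choice)
  have small: "small_ivl d (1 / Suc n) q" if "q \<in> F n" for n q
    using F[of n] that unfolding maximal_disjoint_family_def by blast
  define \<Gamma> where "\<Gamma> = Collect jump \<union> (\<Union>n. F n)"
  show thesis
  proof (rule that)
    fix \<gamma> assume "\<gamma> \<in> \<Gamma>"
    then consider "jump \<gamma>" | n where "small_ivl d (1 / Suc n) \<gamma>"
      unfolding \<Gamma>_def using small by blast
    then show "fst \<gamma> < snd \<gamma>"
      by cases (auto simp: jump_def small_ivl_def ivl_def)
  next
    fix x y :: 'a assume "x < y"
    show "\<exists>\<gamma>\<in>\<Gamma>. x \<le> fst \<gamma> \<and> snd \<gamma> \<le> y"
    proof (cases "dense_between x y")
      case True
      then obtain n q where q: "q \<in> F n" "ivl q \<subseteq> {x<..<y}"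
        using small_family_member_inside[OF assms F \<open>x < y\<close>] by blast
      moreover have "ivl q \<noteq> {}" using small[OF q(1)] unfolding small_ivl_def by blast
      ultimately have "x \<le> fst q \<and> snd q \<le> y"
        using nonempty_interval_subset_bounds unfolding ivl_def by blast
      moreover have "q \<in> \<Gamma>" unfolding \<Gamma>_def using q(1) by blast
      ultimately show ?thesis by blast
    next
      case False
      then obtain s t where st: "x \<le> s" "s < t" "t \<le> y" "{s<..<t} = {}"
        unfolding dense_between_def by blast
      then have "jump (s, t)" unfolding jump_def ivl_def by simp
      then have "(s, t) \<in> \<Gamma>" unfolding \<Gamma>_def by blast
      then show ?thesis using st(1,3) by (intro bexI[of _ "(s, t)"]) auto
    qed
  next
    fix x :: 'a
    have "disjoint_family_on ivl (F n)" for n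
      using F[of n] unfolding maximal_disjoint_family_def by blast
    then show "countable {\<gamma>\<in>\<Gamma>. x \<in> ivl \<gamma>}"
      unfolding \<Gamma>_def by (rule jumps_and_disjoint_families_point_countable)
  qed
qed

lemma Urysohn_step_function:
  fixes a b :: "'a::linorder_topology"
  assumes "compact (UNIV :: 'a set)" "a < b"
  shows "\<exists>f. continuous_map euclidean (top_of_set {0..1::real}) f \<and>
             (\<forall>x\<le>a. f x = 0) \<and> (\<forall>x. b \<le> x \<longrightarrow> f x = 1)"
proof -
  have "compact_space (euclidean :: 'a topology)" using assms(1) by (simp add: compact_space_def)
  then have normal: "normal_space (euclidean :: 'a topology)"
    using compact_Hausdorff_or_regular_imp_normal_space linorder_Hausdorff_space by blast
  have closed: "closedin euclidean {..a}" "closedin euclidean {b..}" by simp_all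
  have disjoint: "disjnt {..a} {b..}" using assms(2) by (auto simp: disjnt_def)
  obtain f where f: "continuous_map euclidean (top_of_set {0..1::real}) f"
      "f ` {..a} \<subseteq> {0}" "f ` {b..} \<subseteq> {1}"
    by (rule Urysohn_lemma[OF normal closed disjoint zero_le_one])
  then show ?thesis by (intro exI[of _ f]) auto
qed

lemma step_functions_continuous_injective:
  fixes \<Gamma> :: "('a::linorder_topology \<times> 'a) set" and f :: "'a \<times> 'a \<Rightarrow> 'a \<Rightarrow> real"
  assumes separating: "\<And>x y. x < y \<Longrightarrow> \<exists>\<gamma>\<in>\<Gamma>. x \<le> fst \<gamma> \<and> snd \<gamma> \<le> y"
    and cont: "\<And>\<gamma>. \<gamma> \<in> \<Gamma> \<Longrightarrow> continuous_map euclidean (top_of_set {0..1}) (f \<gamma>)"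
    and low: "\<And>\<gamma> x. \<gamma> \<in> \<Gamma> \<Longrightarrow> x \<le> fst \<gamma> \<Longrightarrow> f \<gamma> x = 0"
    and high: "\<And>\<gamma> x. \<gamma> \<in> \<Gamma> \<Longrightarrow> snd \<gamma> \<le> x \<Longrightarrow> f \<gamma> x = 1"
  defines "e \<equiv> \<lambda>x. restrict (\<lambda>\<gamma>. f \<gamma> x) \<Gamma>"
  shows "continuous_map euclidean (cube_top \<Gamma>) e" "inj e"
proof -
  show "continuous_map euclidean (cube_top \<Gamma>) e"
    unfolding cube_top_def continuous_map_componentwise
  proof (intro conjI ballI)
    show "e ` topspace euclidean \<subseteq> extensional \<Gamma>" unfolding e_def by auto
    show "continuous_map euclidean (top_of_set {0..1}) (\<lambda>x. e x \<gamma>)" if "\<gamma> \<in> \<Gamma>" for \<gamma>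
      using cont[OF that] that unfolding e_def by simp
  qed
  have "e u \<noteq> e v" if uv: "u < v" for u v
  proof -
    obtain \<gamma> where "\<gamma> \<in> \<Gamma>" "u \<le> fst \<gamma>" "snd \<gamma> \<le> v" using separating[OF uv] by blast
    then have "e u \<gamma> = 0" "e v \<gamma> = 1" unfolding e_def using low high by simp_all
    then show ?thesis by force
  qed
  then show "inj e" by (metis injI linorder_neqE)
qed

text \<open>The embedding: Urysohn step functions along a separating family embed the compact space
  into the cube [0, 1]^\<Gamma>; a coordinate of the image of x is 0 or 1 unless x lies in the open
  interval of the pair, which happens for countably many pairs only.\<close>
lemma separating_point_countable_imp_almost_totally_disconnected:
  fixes \<Gamma> :: "('a::linorder_topology \<times> 'a) set"
  assumes compact: "compact (UNIV :: 'a set)"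
    and ordered: "\<And>\<gamma>. \<gamma> \<in> \<Gamma> \<Longrightarrow> fst \<gamma> < snd \<gamma>"
    and separating: "\<And>x y. x < y \<Longrightarrow> \<exists>\<gamma>\<in>\<Gamma>. x \<le> fst \<gamma> \<and> snd \<gamma> \<le> y"
    and point_countable: "\<And>x. countable {\<gamma>\<in>\<Gamma>. x \<in> ivl \<gamma>}"
  shows "almost_totally_disconnected (euclidean :: 'a topology)"
proof -
  have "\<forall>\<gamma>\<in>\<Gamma>. \<exists>g. continuous_map euclidean (top_of_set {0..1::real}) g \<and>
      (\<forall>x\<le>fst \<gamma>. g x = 0) \<and> (\<forall>x. snd \<gamma> \<le> x \<longrightarrow> g x = 1)"
    using Urysohn_step_function[OF compact ordered] by blast
  from bchoice[OF this] obtain f where f: "\<And>\<gamma>. \<gamma> \<in> \<Gamma> \<Longrightarrow>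
      continuous_map euclidean (top_of_set {0..1::real}) (f \<gamma>) \<and>
      (\<forall>x\<le>fst \<gamma>. f \<gamma> x = 0) \<and> (\<forall>x. snd \<gamma> \<le> x \<longrightarrow> f \<gamma> x = 1)"
    by blast
  define e where "e x = restrict (\<lambda>\<gamma>. f \<gamma> x) \<Gamma>" for x
  have low: "f \<gamma> x = 0" if "\<gamma> \<in> \<Gamma>" "x \<le> fst \<gamma>" for \<gamma> x using f[OF that(1)] that(2) by blast
  have high: "f \<gamma> x = 1" if "\<gamma> \<in> \<Gamma>" "snd \<gamma> \<le> x" for \<gamma> x using f[OF that(1)] that(2) by blast
  have f_cont: "continuous_map euclidean (top_of_set {0..1}) (f \<gamma>)" if "\<gamma> \<in> \<Gamma>" for \<gamma>
    using f[OF that] by blast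
  note step = step_functions_continuous_injective[where \<Gamma>=\<Gamma> and f=f, OF separating f_cont low high]
  have cont: "continuous_map euclidean (cube_top \<Gamma>) e" unfolding e_def by (rule step(1))
  have "inj e" unfolding e_def by (rule step(2))
  moreover have "Hausdorff_space (cube_top \<Gamma>)"
    unfolding cube_top_def Hausdorff_space_product_topology by (simp add: Hausdorff_space_subtopology)
  moreover have "compact_space (euclidean :: 'a topology)" using compact by (simp add: compact_space_def)
  ultimately have "embedding_map euclidean (cube_top \<Gamma>) e"
    using continuous_imp_embedding_map[OF cont] by (simp add: inj_on_subset)
  then have "(euclidean :: 'a topology) homeomorphic_space subtopology (cube_top \<Gamma>) (range e)"
    using embedding_map_imp_homeomorphic_space by fastforce
  moreover have "e x \<in> Sigma01 \<Gamma>" for x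
  proof -
    have "{\<gamma>\<in>\<Gamma>. e x \<gamma> \<notin> {0, 1}} \<subseteq> {\<gamma>\<in>\<Gamma>. x \<in> ivl \<gamma>}"
      using low high unfolding e_def ivl_def by (force simp: not_le[symmetric])
    then have "countable {\<gamma>\<in>\<Gamma>. e x \<gamma> \<notin> {0, 1}}" by (rule countable_subset[OF _ point_countable])
    moreover have "e x \<in> topspace (cube_top \<Gamma>)" using cont unfolding continuous_map_def by auto
    ultimately show "e x \<in> Sigma01 \<Gamma>" unfolding Sigma01_def by simp
  qed
  ultimately show ?thesis unfolding almost_totally_disconnected_def by blast
qed

theorem theorem1:
  assumes "compact (UNIV :: 'a::linorder_topology set)"
    and "fragmentable (euclidean :: 'a topology)"
  shows "almost_totally_disconnected (euclidean :: 'a topology)"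
proof -
  obtain d where d: "quasi_metric_on UNIV d" "fragments d (euclidean :: 'a topology)"
    using assms(2) unfolding fragmentable_def by auto
  obtain \<Gamma> :: "('a \<times> 'a) set" where "\<And>\<gamma>. \<gamma> \<in> \<Gamma> \<Longrightarrow> fst \<gamma> < snd \<gamma>"
    and "\<And>x y. x < y \<Longrightarrow> \<exists>\<gamma>\<in>\<Gamma>. x \<le> fst \<gamma> \<and> snd \<gamma> \<le> y"
    and "\<And>x. countable {\<gamma>\<in>\<Gamma>. x \<in> ivl \<gamma>}"
    using fragmentable_separating_family[OF assms(1) d] by blast
  then show ?thesis by (rule separating_point_countable_imp_almost_totally_disconnected[OF assms(1)])
qed

end
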